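(* Let $\pi_1,\pi_2,\pi_3,\pi_4$ be paths of length $\ell$ in a simple graph such that $V(\pi_3)\cap V(\pi_4)\neq\emptyset$, $|E(\pi_3)\cup E(\pi_4)|=2\ell-j$ and $|(E(\pi_1)\cup E(\pi_2))\cap(E(\pi_3)\cup E(\pi_4))|=j'$, where $0\le j\le\ell$ and $1\le j'\le 2\ell-j$. Then $$|V(\pi_3)\cap V(\pi_4)|+|(V(\pi_3)\cup V(\pi_4))\cap(V(\pi_1)\cup V(\pi_2))|\ge j+j'+2.$$
   Context: A path of length $\ell$ is a sequence $(v_0,\dots,v_\ell)$ of distinct vertices with edges $(v_{i-1},v_i)$; $V(\pi)$ and $E(\pi)$ denote its vertex and edge sets. *)

theory Defs
  imports Main
begin

definition simple_graph :: "('a \<Rightarrow> 'a \<Rightarrow> bool) \<Rightarrow> bool" where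
  "simple_graph Adj \<longleftrightarrow> (\<forall>u v. Adj u v \<longrightarrow> Adj v u) \<and> (\<forall>v. \<not> Adj v v)"

definition is_path :: "('a \<Rightarrow> 'a \<Rightarrow> bool) \<Rightarrow> nat \<Rightarrow> 'a list \<Rightarrow> bool" where
  "is_path Adj l p \<longleftrightarrow> length p = Suc l \<and> distinct p \<and> (\<forall>i<l. Adj (p ! i) (p ! Suc i))"

definition path_verts :: "'a list \<Rightarrow> 'a set" where
  "path_verts p = set p"

definition path_edges :: "'a list \<Rightarrow> 'a set set" where
  "path_edges p = {{p ! i, p ! Suc i} | i. Suc i < length p}"

end

theory Submission
  imports Defs
begin

text \<open>Let \<open>U = V(\<pi>\<^sub>3) \<union> V(\<pi>\<^sub>4)\<close>, \<open>E = E(\<pi>\<^sub>3) \<union> E(\<pi>\<^sub>4)\<close>,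
  \<open>W = U \<inter> (V(\<pi>\<^sub>1) \<union> V(\<pi>\<^sub>2))\<close> and \<open>F = E \<inter> (E(\<pi>\<^sub>1) \<union> E(\<pi>\<^sub>2))\<close>. Every edge of \<open>F\<close>
  lies inside \<open>W\<close>, and \<open>W\<close> is nonempty because \<open>j' \<ge> 1\<close>. In the connected graph
  \<open>\<pi>\<^sub>3 \<union> \<pi>\<^sub>4\<close> each vertex outside \<open>W\<close> can be charged injectively to an edge pointing towards
  \<open>W\<close> along its path; such an edge is not in \<open>F\<close>. Hence \<open>|U - W| \<le> |E - F|\<close>, i.e.
  \<open>2\<ell> + 2 - |V(\<pi>\<^sub>3) \<inter> V(\<pi>\<^sub>4)| - |W| \<le> 2\<ell> - j - j'\<close>.\<close>

lemma path_edges_eq_image: "path_edges p = (\<lambda>i. {p ! i, p ! Suc i}) ` {i. Suc i < length p}"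
  by (auto simp: path_edges_def)

lemma finite_path_edges: "finite (path_edges p)"
proof -
  have "{i. Suc i < length p} \<subseteq> {..<length p}" by auto
  then show ?thesis
    unfolding path_edges_eq_image by (meson finite_imageI finite_lessThan finite_subset)
qed

lemma path_edge_subset: "e \<in> path_edges p \<Longrightarrow> e \<subseteq> set p"
  by (auto simp: path_edges_def)

lemma inj_on_path_edge:
  assumes "distinct p"
  shows "inj_on (\<lambda>i. {p ! i, p ! Suc i}) {i. Suc i < length p}"
proof (rule inj_onI)
  fix i k assume i: "i \<in> {i. Suc i < length p}" and k: "k \<in> {i. Suc i < length p}"
    and "{p ! i, p ! Suc i} = {p ! k, p ! Suc k}"
  then have "p ! i = p ! k \<or> p ! i = p ! Suc k \<and> p ! Suc i = p ! k"
    by (auto simp: doubleton_eq_iff)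
  then show "i = k" using i k assms by (auto simp: nth_eq_iff_index_eq)
qed

text \<open>Charge each vertex of \<open>Y\<close> to the edge leaving it towards a fixed vertex \<open>p ! a \<notin> Y\<close>.\<close>

lemma card_le_card_path_edges_meeting:
  assumes "distinct p" and "Y \<subset> set p"
  shows "card Y \<le> card {e \<in> path_edges p. e \<inter> Y \<noteq> {}}"
proof -
  obtain a where a: "a < length p" "p ! a \<notin> Y"
    using assms(2) by (metis in_set_conv_nth psubset_imp_ex_mem DiffE)
  define K where "K = {k. k < length p \<and> p ! k \<in> Y}"
  define towards_a where "towards_a k = (if k < a then k else k - 1)" for k
  define edge where "edge i = {p ! i, p ! Suc i}" for i
  have a_notin_K: "a \<notin> K" using a by (simp add: K_def)
  have Y_eq: "Y = (!) p ` K"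
  proof
    show "Y \<subseteq> (!) p ` K"
    proof
      fix y assume "y \<in> Y"
      moreover obtain k where "k < length p" "p ! k = y"
        using \<open>y \<in> Y\<close> assms(2) by (metis psubsetD in_set_conv_nth)
      ultimately show "y \<in> (!) p ` K" by (auto simp: K_def)
    qed
  qed (auto simp: K_def)
  have inj_nth: "inj_on ((!) p) K"
    using assms(1) by (auto simp: K_def inj_on_def nth_eq_iff_index_eq)
  have inj_towards: "inj_on towards_a K"
  proof (rule inj_onI)
    fix x y assume "x \<in> K" "y \<in> K" "towards_a x = towards_a y"
    moreover have "x \<noteq> a" "y \<noteq> a" using a_notin_K \<open>x \<in> K\<close> \<open>y \<in> K\<close> by auto
    ultimately show "x = y" by (auto simp: towards_a_def split: if_splits)
  qed
  have towards_valid: "towards_a ` K \<subseteq> {i. Suc i < length p}"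
  proof
    fix i assume "i \<in> towards_a ` K"
    then obtain k where "k \<in> K" "i = towards_a k" by blast
    moreover have "k \<noteq> a" using \<open>k \<in> K\<close> a_notin_K by blast
    ultimately show "i \<in> {i. Suc i < length p}" using a(1) by (auto simp: towards_a_def K_def)
  qed
  have edges_meeting: "edge ` towards_a ` K \<subseteq> {e \<in> path_edges p. e \<inter> Y \<noteq> {}}"
  proof
    fix e assume "e \<in> edge ` towards_a ` K"
    then obtain k where k: "k \<in> K" "e = edge (towards_a k)" by auto
    have "Suc (towards_a k) < length p" using towards_valid k(1) by auto
    moreover have "k \<noteq> a" using k(1) a_notin_K by blast
    then have "p ! k \<in> e \<inter> Y"
      using k by (cases "k < a") (auto simp: edge_def towards_a_def K_def)
    ultimately show "e \<in> {e \<in> path_edges p. e \<inter> Y \<noteq> {}}"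
      using k(2) by (auto simp: path_edges_def edge_def)
  qed
  have "card Y = card (towards_a ` K)"
    using Y_eq inj_nth inj_towards by (simp add: card_image)
  also have "\<dots> = card (edge ` towards_a ` K)"
    using inj_on_subset[OF inj_on_path_edge[OF assms(1)] towards_valid]
    by (simp add: card_image edge_def)
  also have "\<dots> \<le> card {e \<in> path_edges p. e \<inter> Y \<noteq> {}}"
    using edges_meeting by (intro card_mono) (simp_all add: finite_path_edges)
  finally show ?thesis .
qed

lemma card_vertices_outside_le_edges_outside_of_mem:
  assumes "distinct p" "distinct q" "set p \<inter> set q \<noteq> {}" "w \<in> set p \<inter> W"
    and "\<And>e. e \<in> F \<Longrightarrow> e \<subseteq> W"
  shows "card (set p \<union> set q - W) \<le> card (path_edges p \<union> path_edges q - F)"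
proof -
  define Xp where "Xp = set p - W"
  define Xq where "Xq = set q - set p - W"
  define Ep where "Ep = path_edges p - F"
  define Eq where "Eq = path_edges q - path_edges p - F"
  have fin: "finite Ep" "finite Eq" by (simp_all add: Ep_def Eq_def finite_path_edges)
  have "card Xp \<le> card {e \<in> path_edges p. e \<inter> Xp \<noteq> {}}"
    using assms(4) by (intro card_le_card_path_edges_meeting assms(1)) (auto simp: Xp_def)
  also have "\<dots> \<le> card Ep"
    using assms(5) fin by (intro card_mono) (auto simp: Xp_def Ep_def)
  finally have card_Xp: "card Xp \<le> card Ep" .
  have "card Xq \<le> card {e \<in> path_edges q. e \<inter> Xq \<noteq> {}}"
    using assms(3) by (intro card_le_card_path_edges_meeting assms(2)) (auto simp: Xq_def)
  also have "\<dots> \<le> card Eq"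
  proof (rule card_mono[OF fin(2)])
    show "{e \<in> path_edges q. e \<inter> Xq \<noteq> {}} \<subseteq> Eq"
      using assms(5) path_edge_subset[of _ p] unfolding Xq_def Eq_def by blast
  qed
  finally have card_Xq: "card Xq \<le> card Eq" .
  have "set p \<union> set q - W = Xp \<union> Xq" "Xp \<inter> Xq = {}"
    by (auto simp: Xp_def Xq_def)
  moreover have "path_edges p \<union> path_edges q - F = Ep \<union> Eq" "Ep \<inter> Eq = {}"
    by (auto simp: Ep_def Eq_def)
  moreover have "finite Xp" "finite Xq" by (simp_all add: Xp_def Xq_def)
  ultimately show ?thesis
    using card_Xp card_Xq fin by (simp add: card_Un_disjoint)
qed

lemma card_vertices_outside_le_edges_outside:
  assumes "distinct p" "distinct q" "set p \<inter> set q \<noteq> {}" "(set p \<union> set q) \<inter> W \<noteq> {}"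
    and "\<And>e. e \<in> F \<Longrightarrow> e \<subseteq> W"
  shows "card (set p \<union> set q - W) \<le> card (path_edges p \<union> path_edges q - F)"
proof -
  obtain w where "w \<in> (set p \<union> set q) \<inter> W" using assms(4) by blast
  then consider "w \<in> set p \<inter> W" | "w \<in> set q \<inter> W" by blast
  then show ?thesis
  proof cases
    case 1
    show ?thesis by (rule card_vertices_outside_le_edges_outside_of_mem[OF assms(1-3) 1 assms(5)])
  next
    case 2
    have "set q \<inter> set p \<noteq> {}" using assms(3) by blast
    from card_vertices_outside_le_edges_outside_of_mem[OF assms(2,1) this 2 assms(5)]
    show ?thesis by (simp only: Un_commute)
  qed
qed

theorem lemma3p8:
  fixes Adj :: "'a \<Rightarrow> 'a \<Rightarrow> bool" and l j j' :: nat and p1 p2 p3 p4 :: "'a list"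
  assumes "simple_graph Adj"
    and "is_path Adj l p1" and "is_path Adj l p2" and "is_path Adj l p3" and "is_path Adj l p4"
    and "path_verts p3 \<inter> path_verts p4 \<noteq> {}"
    and "card (path_edges p3 \<union> path_edges p4) = 2 * l - j"
    and "card ((path_edges p1 \<union> path_edges p2) \<inter> (path_edges p3 \<union> path_edges p4)) = j'"
    and "j \<le> l" and "1 \<le> j'" and "j' \<le> 2 * l - j"
  shows "card (path_verts p3 \<inter> path_verts p4)
         + card ((path_verts p3 \<union> path_verts p4) \<inter> (path_verts p1 \<union> path_verts p2)) \<ge> j + j' + 2"
proof -
  define W where "W = (set p3 \<union> set p4) \<inter> (set p1 \<union> set p2)"
  define F where "F = (path_edges p1 \<union> path_edges p2) \<inter> (path_edges p3 \<union> path_edges p4)"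
  have p3: "distinct p3" "length p3 = Suc l" and p4: "distinct p4" "length p4 = Suc l"
    using assms(4,5) by (auto simp: is_path_def)
  have F_in_W: "\<And>e. e \<in> F \<Longrightarrow> e \<subseteq> W"
    unfolding F_def W_def using path_edge_subset by blast
  have "F \<noteq> {}" using assms(8,10) by (auto simp: F_def)
  then obtain e where e: "e \<in> F" by blast
  have "e \<noteq> {}" using e by (auto simp: F_def path_edges_def)
  moreover have "e \<subseteq> set p3 \<union> set p4"
    using e path_edge_subset[of e p3] path_edge_subset[of e p4] unfolding F_def by blast
  ultimately have "(set p3 \<union> set p4) \<inter> W \<noteq> {}" using e F_in_W by blast
  then have "card (set p3 \<union> set p4 - W) \<le> card (path_edges p3 \<union> path_edges p4 - F)"
    using card_vertices_outside_le_edges_outside[OF p3(1) p4(1) _ _ F_in_W] assms(6)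
    by (simp add: path_verts_def)
  moreover have "card (path_edges p3 \<union> path_edges p4 - F) = 2 * l - j - j'"
  proof -
    have "card (path_edges p3 \<union> path_edges p4 - F) = card (path_edges p3 \<union> path_edges p4) - card F"
      by (rule card_Diff_subset) (auto simp: F_def finite_path_edges)
    then show ?thesis using assms(7,8) by (simp add: F_def)
  qed
  moreover have "card (set p3 \<union> set p4 - W) = card (set p3 \<union> set p4) - card W"
    by (rule card_Diff_subset) (auto simp: W_def)
  moreover have "card (set p3 \<union> set p4) + card (set p3 \<inter> set p4) = 2 * l + 2"
    using card_Un_Int[of "set p3" "set p4"] p3 p4 by (simp add: distinct_card)
  moreover have "card W \<le> card (set p3 \<union> set p4)"
    by (rule card_mono) (auto simp: W_def)
  ultimately show ?thesis
    using assms(9,11) unfolding path_verts_def W_def[symmetric] by linarith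
qed

end
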